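(* Let $D$ be a squarefree integer and $p>5$ a prime not dividing $D$. Then $C_D(\mathbb{Q}_p)\neq\emptyset$.
   Context: $C_D\subset\mathbb{P}^4$ is the curve over $\mathbb{Q}$ given by $X_0^2-2X_1^2+X_2^2=0$, $X_1^2-2X_2^2+DX_3^2=0$, $X_2^2-2DX_3^2+X_4^2=0$. *)

theory Defs
  imports "HOL-Computational_Algebra.Computational_Algebra" "HOL-Number_Theory.Number_Theory"
begin

text \<open>p-adic integers Z_p as the inverse limit of Z/p^k Z: a p-adic integer is
  represented by a sequence x with x k an integer representative of its residue
  mod p^k, and the sequence compatible: x (k+1) = x k (mod p^k).\<close>
definition padic_int :: "nat \<Rightarrow> (nat \<Rightarrow> int) \<Rightarrow> bool" where
  "padic_int p x \<longleftrightarrow> (\<forall>k. [x (Suc k) = x k] (mod (int p) ^ k))"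

definition padic_zero :: "nat \<Rightarrow> (nat \<Rightarrow> int) \<Rightarrow> bool" where
  "padic_zero p x \<longleftrightarrow> (\<forall>k. [x k = 0] (mod (int p) ^ k))"

definition CD_eq1 :: "int \<Rightarrow> int \<Rightarrow> int \<Rightarrow> int \<Rightarrow> int \<Rightarrow> int \<Rightarrow> int" where
  "CD_eq1 D x0 x1 x2 x3 x4 = x0^2 - 2*x1^2 + x2^2"
definition CD_eq2 :: "int \<Rightarrow> int \<Rightarrow> int \<Rightarrow> int \<Rightarrow> int \<Rightarrow> int \<Rightarrow> int" where
  "CD_eq2 D x0 x1 x2 x3 x4 = x1^2 - 2*x2^2 + D*x3^2"
definition CD_eq3 :: "int \<Rightarrow> int \<Rightarrow> int \<Rightarrow> int \<Rightarrow> int \<Rightarrow> int \<Rightarrow> int" where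
  "CD_eq3 D x0 x1 x2 x3 x4 = x2^2 - 2*D*x3^2 + x4^2"

text \<open>Clearing
  denominators, such a point is given by a nonzero vector (x0,...,x4) in Z_p^5
  satisfying the three equations in Z_p (equations checked residue-wise,
  ring operations of Z_p being componentwise on residues).\<close>
definition CD_has_Qp_point :: "int \<Rightarrow> nat \<Rightarrow> bool" where
  "CD_has_Qp_point D p \<longleftrightarrow>
     (\<exists>x :: nat \<Rightarrow> nat \<Rightarrow> int.
        (\<forall>i<5. padic_int p (x i)) \<and>
        (\<exists>i<5. \<not> padic_zero p (x i)) \<and>
        padic_zero p (\<lambda>k. CD_eq1 D (x 0 k) (x 1 k) (x 2 k) (x 3 k) (x 4 k)) \<and>
        padic_zero p (\<lambda>k. CD_eq2 D (x 0 k) (x 1 k) (x 2 k) (x 3 k) (x 4 k)) \<and>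
        padic_zero p (\<lambda>k. CD_eq3 D (x 0 k) (x 1 k) (x 2 k) (x 3 k) (x 4 k)))"

end

theory Submission
  imports Defs
begin

text \<open>The numbers \<open>x0\<^sup>2, x1\<^sup>2, x2\<^sup>2, D x3\<^sup>2, x4\<^sup>2\<close> of a point of \<open>C_D\<close> form an arithmetic
  progression. By Hensel's lemma any nontrivial progression \<open>a + i r\<close> (\<open>i = 0..4\<close>) of integers that
  are zero or quadratic residues mod \<open>p\<close> gives a \<open>\<rat>_p\<close>-point, except that the fourth term must
  have Legendre symbol \<open>(D/p)\<close>. For \<open>(D/p) = 1\<close> take \<open>a = 1, r = 0\<close>. For \<open>(D/p) = -1\<close> we need
  the sign pattern \<open>(+,+,+,-,+)\<close> of \<open>\<chi> = (\<cdot>/p)\<close>. Let \<open>n\<close> be the least non-residue. If \<open>n \<ge> 5\<close>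
  is odd, then \<open>n-3, \<dots>, n+1\<close> works since \<open>n + 1 = 2 \<cdot> (n+1)/2\<close>. If \<open>n = 2\<close>, compare \<open>\<chi>\<close>
  with the characters \<open>(\<cdot>/3)\<close> and \<open>(\<cdot>/5)\<close>, which are also \<open>-1\<close> at 2: at the least \<open>d\<close> where
  \<open>\<chi>\<close> deviates, the progression \<open>d - 3q, \<dots>, d + q\<close> (doubled if necessary) has the right
  pattern, and the finitely many small cases are settled by explicit progressions.\<close>

section \<open>Legendre symbols\<close>

lemma Legendre_cases: "Legendre a m = 0 \<or> Legendre a m = 1 \<or> Legendre a m = -1"
  by (simp add: Legendre_def)

lemma Legendre_eq_0_iff: "Legendre a m = 0 \<longleftrightarrow> m dvd a"
  by (simp add: Legendre_def cong_0_iff)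

lemma Legendre_cong:
  assumes "[a = b] (mod m)"
  shows "Legendre a m = Legendre b m"
proof -
  have "[a = 0] (mod m) \<longleftrightarrow> [b = 0] (mod m)" "QuadRes m a \<longleftrightarrow> QuadRes m b"
    using assms unfolding QuadRes_def by (meson cong_sym cong_trans)+
  then show ?thesis by (simp add: Legendre_def)
qed

lemma Legendre_one:
  assumes "m > 1"
  shows "Legendre 1 m = 1"
proof -
  have "QuadRes m 1" unfolding QuadRes_def by (rule exI[of _ 1]) simp
  with assms show ?thesis by (simp add: Legendre_def cong_0_iff)
qed

lemma QuadRes_3_iff: "QuadRes 3 k \<longleftrightarrow> k mod 3 \<in> {0, 1}"
proof
  assume "QuadRes 3 k"
  then obtain y :: int where "(y mod 3)^2 mod 3 = k mod 3"
    unfolding QuadRes_def cong_def by (metis power_mod)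
  moreover have "y mod 3 \<in> {0, 1, 2}" by auto
  ultimately show "k mod 3 \<in> {0, 1}" by auto
next
  assume "k mod 3 \<in> {0, 1}"
  then have "[0^2 = k] (mod 3) \<or> [1^2 = k] (mod 3)" by (auto simp: cong_def)
  then show "QuadRes 3 k" unfolding QuadRes_def by blast
qed

lemma QuadRes_5_iff: "QuadRes 5 k \<longleftrightarrow> k mod 5 \<in> {0, 1, 4}"
proof
  assume "QuadRes 5 k"
  then obtain y :: int where "(y mod 5)^2 mod 5 = k mod 5"
    unfolding QuadRes_def cong_def by (metis power_mod)
  moreover have "y mod 5 \<in> {0, 1, 2, 3, 4}" by auto
  ultimately show "k mod 5 \<in> {0, 1, 4}" by auto
next
  assume "k mod 5 \<in> {0, 1, 4}"
  then have "[0^2 = k] (mod 5) \<or> [1^2 = k] (mod 5) \<or> [2^2 = k] (mod 5)"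
    by (auto simp: cong_def)
  then show "QuadRes 5 k" unfolding QuadRes_def by blast
qed

lemma Legendre_3: "Legendre k 3 = (if k mod 3 = 0 then 0 else if k mod 3 = 1 then 1 else -1)"
  by (auto simp: Legendre_def QuadRes_3_iff cong_0_iff)

lemma Legendre_5: "Legendre k 5 = (if k mod 5 = 0 then 0 else if k mod 5 \<in> {1, 4} then 1 else -1)"
  by (auto simp: Legendre_def QuadRes_5_iff cong_0_iff)

section \<open>Hensel lifting and the point criterion\<close>

lemma cong_second_difference_0:
  fixes u v w :: int
  assumes "[u = a] (mod m)" "[v = b] (mod m)" "[w = c] (mod m)" "a - 2 * b + c = 0"
  shows "[u - 2 * v + w = 0] (mod m)"
  using cong_add[OF cong_diff[OF assms(1) cong_scalar_left[OF assms(2), of 2]] assms(3)] assms(4)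
  by simp

lemma CD_eqs_cong_0:
  fixes D :: int
  assumes x0: "[x0^2 = D^2 * a] (mod m)" and x1: "[x1^2 = D^2 * (a + r)] (mod m)"
    and x2: "[x2^2 = D^2 * (a + 2 * r)] (mod m)" and x3: "[x3^2 = D * (a + 3 * r)] (mod m)"
    and x4: "[x4^2 = D^2 * (a + 4 * r)] (mod m)"
  shows "[CD_eq1 D x0 x1 x2 x3 x4 = 0] (mod m)" "[CD_eq2 D x0 x1 x2 x3 x4 = 0] (mod m)"
    "[CD_eq3 D x0 x1 x2 x3 x4 = 0] (mod m)"
proof -
  have Dx3: "[D * x3^2 = D * (D * (a + 3 * r))] (mod m)"
    using cong_scalar_left[OF x3] .
  show "[CD_eq1 D x0 x1 x2 x3 x4 = 0] (mod m)"
    unfolding CD_eq1_def by (rule cong_second_difference_0[OF x0 x1 x2]) (simp add: algebra_simps)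
  show "[CD_eq2 D x0 x1 x2 x3 x4 = 0] (mod m)"
    unfolding CD_eq2_def
    by (rule cong_second_difference_0[OF x1 x2 Dx3]) (simp add: algebra_simps power2_eq_square)
  show "[CD_eq3 D x0 x1 x2 x3 x4 = 0] (mod m)"
    unfolding CD_eq3_def mult.assoc
    by (rule cong_second_difference_0[OF x2 Dx3 x4]) (simp add: algebra_simps power2_eq_square)
qed

lemma padic_int_by_lifting:
  fixes P :: "nat \<Rightarrow> int \<Rightarrow> bool"
  assumes start: "P 1 y"
    and lift: "\<And>k y. 1 \<le> k \<Longrightarrow> P k y \<Longrightarrow> \<exists>y'. [y' = y] (mod int p ^ k) \<and> P (Suc k) y'"
  shows "\<exists>s. padic_int p s \<and> s 1 = y \<and> (\<forall>k\<ge>1. P k (s k))"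
proof -
  define s where "s = rec_nat y (\<lambda>k sk. if k = 0 then y
    else SOME y'. [y' = sk] (mod int p ^ k) \<and> P (Suc k) y')"
  have s_1: "s 1 = y" by (simp add: s_def)
  have s_Suc: "[s (Suc k) = s k] (mod int p ^ k) \<and> P (Suc k) (s (Suc k))"
    if "1 \<le> k" "P k (s k)" for k
  proof -
    have "s (Suc k) = (SOME y'. [y' = s k] (mod int p ^ k) \<and> P (Suc k) y')"
      using that(1) by (simp add: s_def)
    then show ?thesis using someI_ex[OF lift[OF that]] by simp
  qed
  have P_s: "P k (s k)" if "1 \<le> k" for k
    using that
  proof (induction k rule: dec_induct)
    case base
    then show ?case using start s_1 by simp
  next
    case (step n)
    then show ?case using s_Suc by simp
  qed
  have "[s (Suc k) = s k] (mod int p ^ k)" for k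
    using s_Suc[of k] P_s[of k] by (cases "k = 0") simp_all
  then show ?thesis using s_1 P_s unfolding padic_int_def by blast
qed

definition residue_or_zero :: "nat \<Rightarrow> int \<Rightarrow> bool" where
  "residue_or_zero p c \<longleftrightarrow> c = 0 \<or> Legendre c p = 1"

text \<open>The fourth term stands for \<open>D x3\<^sup>2\<close>, so it must have Legendre symbol \<open>e = (D/p)\<close>. Zero terms
  are allowed only as the integer \<open>0\<close>: a nonzero multiple of \<open>p\<close> need not be a \<open>p\<close>-adic square.\<close>
definition CD_progression :: "nat \<Rightarrow> int \<Rightarrow> int \<Rightarrow> int \<Rightarrow> bool" where
  "CD_progression p e a r \<longleftrightarrow> (a \<noteq> 0 \<or> r \<noteq> 0) \<and>
     residue_or_zero p a \<and> residue_or_zero p (a + r) \<and> residue_or_zero p (a + 2 * r) \<and>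
     (a + 3 * r = 0 \<or> Legendre (a + 3 * r) p = e) \<and> residue_or_zero p (a + 4 * r)"

context
  fixes p :: nat
  assumes p_prime: "prime p" and p_gt_2: "2 < p"
begin

lemma Legendre_unit: "\<not> int p dvd a \<Longrightarrow> Legendre a p = 1 \<or> Legendre a p = -1"
  using Legendre_cases[of a p] Legendre_eq_0_iff[of a p] by auto

text \<open>Euler's criterion gives multiplicativity modulo \<open>p\<close>, and two values in \<open>{-1, 0, 1}\<close>
  that are congruent modulo \<open>p > 2\<close> are equal.\<close>
lemma Legendre_mult: "Legendre (a * b) p = Legendre a p * Legendre b p"
proof (rule ccontr)
  let ?e = "(p - 1) div 2" and ?\<delta> = "Legendre (a * b) p - Legendre a p * Legendre b p"
  assume ne: "Legendre (a * b) p \<noteq> Legendre a p * Legendre b p"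
  have "[Legendre (a * b) p = (a * b) ^ ?e] (mod p)"
    using euler_criterion[OF p_prime p_gt_2] .
  moreover have "[Legendre a p * Legendre b p = a ^ ?e * b ^ ?e] (mod p)"
    using cong_mult[OF euler_criterion[OF p_prime p_gt_2] euler_criterion[OF p_prime p_gt_2]] .
  ultimately have "[Legendre (a * b) p = Legendre a p * Legendre b p] (mod p)"
    by (metis cong_sym cong_trans power_mult_distrib)
  then have "int p \<le> \<bar>?\<delta>\<bar>"
    using ne dvd_imp_le_int[of ?\<delta> "int p"] by (simp add: cong_iff_dvd_diff)
  moreover have "\<bar>?\<delta>\<bar> \<le> 2"
    using Legendre_cases[of "a * b" p] Legendre_cases[of a p] Legendre_cases[of b p] by auto
  ultimately show False using p_gt_2 by simp
qed

text \<open>Newton step: \<open>y + p^k t\<close> is a root modulo \<open>p^(k+1)\<close> when \<open>2 y t \<equiv> -(y\<^sup>2 - c)/p^k (mod p)\<close>,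
  which is solvable because \<open>2 y\<close> is a unit modulo \<open>p\<close>.\<close>
lemma hensel_lift_square:
  assumes k: "1 \<le> k" and y: "[y^2 = c] (mod int p ^ k)" and c: "\<not> int p dvd c"
  shows "\<exists>y'. [y' = y] (mod int p ^ k) \<and> [y'^2 = c] (mod int p ^ Suc k)"
proof -
  obtain e where e: "y^2 - c = int p ^ k * e"
    using y by (metis cong_iff_dvd_diff cong_sym dvdE)
  have "\<not> int p dvd y"
  proof
    assume "int p dvd y"
    then have "int p dvd y^2 - (y^2 - c)"
      using e k by (simp add: dvd_power power2_eq_square)
    with c show False by simp
  qed
  moreover have "\<not> int p dvd 2" using p_gt_2 by (auto dest: zdvd_imp_le)
  ultimately have "\<not> int p dvd 2 * y"
    using p_prime by (simp add: prime_dvd_mult_iff)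
  then have "coprime (2 * y) (int p)"
    using prime_imp_coprime[of "int p" "2 * y"] p_prime by (simp add: coprime_commute)
  then obtain t where "[2 * y * t = - e] (mod int p)"
    using cong_solve_dvd_int[of "2 * y" "int p" "- e"] by (auto simp: coprime_iff_gcd_eq_1)
  then obtain u where u: "2 * y * t + e = int p * u"
    by (auto simp: cong_iff_dvd_diff elim: dvdE)
  have "(y + int p ^ k * t)^2 - c = (y^2 - c) + int p ^ k * (2 * y * t) + (int p ^ k)^2 * t^2"
    by (simp add: power2_eq_square algebra_simps)
  also have "\<dots> = int p ^ k * (2 * y * t + e) + int p ^ k * int p ^ k * t^2"
    using e by (simp add: power2_eq_square algebra_simps)
  also have "\<dots> = int p ^ Suc k * (u + int p ^ (k - 1) * t^2)"
  proof -
    have "int p ^ k = int p * int p ^ (k - 1)" using k by (simp flip: power_Suc)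
    then show ?thesis using u by (simp add: algebra_simps)
  qed
  finally have "[(y + int p ^ k * t)^2 = c] (mod int p ^ Suc k)"
    by (simp add: cong_iff_dvd_diff)
  moreover have "[y + int p ^ k * t = y] (mod int p ^ k)"
    by (simp add: cong_iff_dvd_diff)
  ultimately show ?thesis by blast
qed

lemma padic_square_root:
  assumes "c = 0 \<or> Legendre c p = 1"
  shows "\<exists>s. padic_int p s \<and> (\<forall>k. [s k ^ 2 = c] (mod int p ^ k)) \<and> (c \<noteq> 0 \<longrightarrow> \<not> int p dvd s 1)"
proof (cases "c = 0")
  case True
  then show ?thesis by (intro exI[of _ "\<lambda>k. 0"]) (simp add: padic_int_def)
next
  case False
  with assms have "Legendre c p = 1" by simp
  then have c: "\<not> int p dvd c" and "QuadRes p c"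
    by (auto simp: Legendre_def cong_0_iff split: if_splits)
  then obtain y where y: "[y^2 = c] (mod int p)" unfolding QuadRes_def by blast
  obtain s where s: "padic_int p s" "s 1 = y" "\<forall>k\<ge>1. [s k ^ 2 = c] (mod int p ^ k)"
    using padic_int_by_lifting[of "\<lambda>k y. [y^2 = c] (mod int p ^ k)"] hensel_lift_square[OF _ _ c] y
    by auto
  have "[s k ^ 2 = c] (mod int p ^ k)" for k
    using s(3) by (cases "k = 0") auto
  moreover have "\<not> int p dvd y"
    using y c by (metis cong_dvd_iff dvd_mult2 power2_eq_square)
  ultimately show ?thesis using s by blast
qed


lemma CD_has_Qp_point_if_progression:
  assumes D: "\<not> int p dvd D" and prog: "CD_progression p (Legendre D p) a r"
  shows "CD_has_Qp_point D p"
proof -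
  have "Legendre D p * Legendre D p = 1"
    using Legendre_unit[OF D] by auto
  then have "residue_or_zero p (D * (a + 3 * r))"
    using prog Legendre_mult[of D "a + 3 * r"] unfolding CD_progression_def residue_or_zero_def
    by auto
  then obtain s3 where s3: "padic_int p s3" "\<forall>k. [s3 k ^ 2 = D * (a + 3 * r)] (mod int p ^ k)"
    using padic_square_root unfolding residue_or_zero_def by blast
  obtain s0 where s0: "padic_int p s0" "\<forall>k. [s0 k ^ 2 = a] (mod int p ^ k)"
      "a \<noteq> 0 \<longrightarrow> \<not> int p dvd s0 1"
    using padic_square_root prog unfolding CD_progression_def residue_or_zero_def by blast
  obtain s1 where s1: "padic_int p s1" "\<forall>k. [s1 k ^ 2 = a + r] (mod int p ^ k)"
      "a + r \<noteq> 0 \<longrightarrow> \<not> int p dvd s1 1"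
    using padic_square_root prog unfolding CD_progression_def residue_or_zero_def by blast
  obtain s2 where s2: "padic_int p s2" "\<forall>k. [s2 k ^ 2 = a + 2 * r] (mod int p ^ k)"
    using padic_square_root prog unfolding CD_progression_def residue_or_zero_def by blast
  obtain s4 where s4: "padic_int p s4" "\<forall>k. [s4 k ^ 2 = a + 4 * r] (mod int p ^ k)"
    using padic_square_root prog unfolding CD_progression_def residue_or_zero_def by blast
  define x where "x = (!) [\<lambda>k. D * s0 k, \<lambda>k. D * s1 k, \<lambda>k. D * s2 k, s3, \<lambda>k. D * s4 k]"
  have D_sq: "[(D * s k)^2 = D^2 * c] (mod int p ^ k)"
    if "\<forall>k. [s k ^ 2 = c] (mod int p ^ k)" for s c k
    using cong_scalar_left[OF that[rule_format, of k], of "D^2"] by (simp add: power_mult_distrib)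
  have sq: "[(x 0 k)^2 = D^2 * a] (mod int p ^ k)" "[(x 1 k)^2 = D^2 * (a + r)] (mod int p ^ k)"
    "[(x 2 k)^2 = D^2 * (a + 2 * r)] (mod int p ^ k)"
    "[(x 3 k)^2 = D * (a + 3 * r)] (mod int p ^ k)"
    "[(x 4 k)^2 = D^2 * (a + 4 * r)] (mod int p ^ k)" for k
    unfolding x_def using D_sq[OF s0(2)] D_sq[OF s1(2)] D_sq[OF s2(2)] s3(2) D_sq[OF s4(2)]
    by simp_all
  have "padic_int p (\<lambda>k. D * s k)" if "padic_int p s" for s
    using that unfolding padic_int_def by (simp add: cong_scalar_left)
  then have "\<forall>i<5. padic_int p (x i)"
    using s0 s1 s2 s3 s4 by (simp add: x_def numeral_eq_Suc less_Suc_eq)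
  moreover have "\<exists>i<5. \<not> padic_zero p (x i)"
  proof -
    have "\<not> padic_zero p (\<lambda>k. D * s k)" if "\<not> int p dvd s 1" for s
      using that D p_prime unfolding padic_zero_def
      by (auto simp: cong_0_iff prime_dvd_mult_iff intro!: exI[of _ 1])
    moreover have "a \<noteq> 0 \<or> a + r \<noteq> 0"
      using prog unfolding CD_progression_def by auto
    ultimately show ?thesis
      using s0(3) s1(3) by (auto simp: x_def intro: exI[of _ 0] exI[of _ 1])
  qed
  moreover have "padic_zero p (\<lambda>k. CD_eq1 D (x 0 k) (x 1 k) (x 2 k) (x 3 k) (x 4 k))"
    "padic_zero p (\<lambda>k. CD_eq2 D (x 0 k) (x 1 k) (x 2 k) (x 3 k) (x 4 k))"
    "padic_zero p (\<lambda>k. CD_eq3 D (x 0 k) (x 1 k) (x 2 k) (x 3 k) (x 4 k))"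
    unfolding padic_zero_def by (intro allI CD_eqs_cong_0[OF sq])+
  ultimately show ?thesis unfolding CD_has_Qp_point_def by blast
qed

end

section \<open>Progressions with the sign pattern \<open>(+,+,+,-,+)\<close>\<close>

lemma least_counterexample_int:
  fixes P :: "int \<Rightarrow> bool"
  assumes "0 < k" and "\<not> P k"
  shows "\<exists>d. 0 < d \<and> d \<le> k \<and> \<not> P d \<and> (\<forall>j. 0 < j \<longrightarrow> j < d \<longrightarrow> P j)"
proof -
  have "\<exists>n::nat. 0 < n \<and> \<not> P (int n)"
    using assms by (intro exI[of _ "nat k"]) simp
  then obtain n :: nat where n: "0 < n" "\<not> P (int n)"
    and least: "\<forall>m<n. \<not> (0 < m \<and> \<not> P (int m))"
    by (auto simp: exists_least_iff[of "\<lambda>n. 0 < n \<and> \<not> P (int n)"])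
  have "int n \<le> k"
    using least assms by (metis int_nat_eq less_le not_less of_nat_less_iff zero_less_nat_eq)
  moreover have "P j" if "0 < j" "j < int n" for j
    using least that by (metis int_nat_eq less_le nat_less_iff zero_less_nat_eq)
  ultimately show ?thesis using n by (intro exI[of _ "int n"]) auto
qed

context
  fixes p :: nat
  assumes p_prime: "prime p" and p_gt_5: "5 < p"
begin

abbreviation \<chi> :: "int \<Rightarrow> int" where
  "\<chi> a \<equiv> Legendre a (int p)"

lemma small_not_dvd_p:
  assumes "2 \<le> m" "m \<le> 5"
  shows "\<not> m dvd int p"
proof -
  have "prime (int p)" using p_prime by simp
  then show ?thesis using assms p_gt_5 unfolding prime_int_iff' by auto
qed

lemma chi_mult: "\<chi> (a * b) = \<chi> a * \<chi> b"
  using Legendre_mult p_prime p_gt_5 by simp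

lemma chi_one: "\<chi> 1 = 1"
  using Legendre_one p_gt_5 by simp

lemma chi_unit:
  assumes "0 < k" "k < int p"
  shows "\<chi> k = 1 \<or> \<chi> k = -1"
proof -
  have "\<not> int p dvd k" using assms by (auto dest: zdvd_imp_le)
  then show ?thesis using Legendre_unit p_prime p_gt_5 by simp
qed

lemma chi_add_zero: "\<chi> a = 0 \<Longrightarrow> \<chi> (b + a) = \<chi> b"
  by (rule Legendre_cong) (simp add: Legendre_eq_0_iff cong_iff_dvd_diff)

lemma chi_p_minus: "\<chi> (int p - j) = \<chi> (- j)"
  by (rule Legendre_cong) (simp add: cong_iff_dvd_diff)

lemma chi_composite:
  "\<chi> 4 = \<chi> 2 * \<chi> 2" "\<chi> 6 = \<chi> 2 * \<chi> 3" "\<chi> 8 = \<chi> 2 * \<chi> 4" "\<chi> 9 = \<chi> 3 * \<chi> 3"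
  "\<chi> 10 = \<chi> 2 * \<chi> 5" "\<chi> 12 = \<chi> 2 * \<chi> 6" "\<chi> 14 = \<chi> 2 * \<chi> 7"
  "\<chi> 15 = \<chi> 3 * \<chi> 5" "\<chi> 16 = \<chi> 2 * \<chi> 8" "\<chi> 18 = \<chi> 2 * \<chi> 9"
  "\<chi> 20 = \<chi> 2 * \<chi> 10" "\<chi> 22 = \<chi> 2 * \<chi> 11" "\<chi> 24 = \<chi> 2 * \<chi> 12"
  "\<chi> 26 = \<chi> 2 * \<chi> 13" "\<chi> 30 = \<chi> 2 * \<chi> 15"
  "\<chi> (- 6) = \<chi> (- 1) * \<chi> 6" "\<chi> (- 13) = \<chi> (- 1) * \<chi> 13"
  using chi_mult[of 2 2] chi_mult[of 2 3] chi_mult[of 2 4] chi_mult[of 3 3] chi_mult[of 2 5]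
    chi_mult[of 2 6] chi_mult[of 2 7] chi_mult[of 3 5] chi_mult[of 2 8] chi_mult[of 2 9]
    chi_mult[of 2 10] chi_mult[of 2 11] chi_mult[of 2 12] chi_mult[of 2 13] chi_mult[of 2 15]
    chi_mult[of "- 1" 6] chi_mult[of "- 1" 13]
  by simp_all

lemma reflected_agreement:
  fixes q :: int
  assumes agree: "\<forall>j. 0 < j \<longrightarrow> j < int p \<longrightarrow> \<not> q dvd j \<longrightarrow> \<chi> j = Legendre j q"
    and j: "0 < j" "j < int p" "\<not> q dvd (int p mod q - j)"
  shows "\<chi> (-1) * \<chi> j = Legendre (int p mod q - j) q"
proof -
  have cong: "[int p - j = int p mod q - j] (mod q)" by (simp add: cong_def mod_diff_left_eq)
  then have "\<not> q dvd (int p - j)" using j(3) cong_dvd_iff by blast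
  then show ?thesis
    using agree j chi_p_minus[of j] chi_mult[of "-1" j] Legendre_cong[OF cong] by simp
qed

lemma progression_of_sign_pattern:
  assumes "\<sigma> = 1 \<or> \<sigma> = -1" and "\<chi> m = \<sigma>"
    and "\<chi> a = \<sigma>" "\<chi> (a + r) = \<sigma>" "\<chi> (a + 2 * r) = \<sigma>" "\<chi> (a + 3 * r) = - \<sigma>"
      "\<chi> (a + 4 * r) = \<sigma>"
  shows "CD_progression p (-1) (m * a) (m * r)"
proof -
  have "m * a + m * r = m * (a + r)" "m * a + i * (m * r) = m * (a + i * r)" for i
    by (simp_all add: algebra_simps)
  moreover have "\<chi> (m * a) \<noteq> 0"
    using assms(1-3) chi_mult[of m a] by auto
  ultimately show ?thesis
    using assms chi_mult[of m] unfolding CD_progression_def residue_or_zero_def by auto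
qed

lemma progression_from_least_nonresidue:
  assumes n: "5 \<le> n" "odd n" "n < int p" and below: "\<forall>j. 0 < j \<longrightarrow> j < n \<longrightarrow> \<chi> j = 1"
    and nonres: "\<chi> n = -1"
  shows "CD_progression p (-1) (n - 3) 1"
proof -
  obtain m where m: "n + 1 = 2 * m" using n(2) by (metis odd_even_add odd_one evenE)
  then have "\<chi> (n + 1) = 1"
    using below n chi_mult[of 2 m] by simp
  moreover have "\<chi> (n - 3) = 1" "\<chi> (n - 2) = 1" "\<chi> (n - 1) = 1"
    using below n by auto
  ultimately show ?thesis
    using nonres unfolding CD_progression_def residue_or_zero_def by (simp add: algebra_simps)
qed

context
  fixes q :: nat
  assumes q_prime: "prime q" and q_gt_2: "2 < q"
    and two_nonresidue: "Legendre 2 q = -1" "\<chi> 2 = -1"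
begin

lemma least_deviation:
  assumes "\<not> (\<forall>j. 0 < j \<longrightarrow> j < int p \<longrightarrow> \<not> int q dvd j \<longrightarrow> \<chi> j = Legendre j q)"
  obtains d where "0 < d" "d < int p" "odd d" "\<not> int q dvd d" "\<chi> d = - Legendre d q"
    "\<forall>j. 0 < j \<longrightarrow> j < d \<longrightarrow> \<not> int q dvd j \<longrightarrow> \<chi> j = Legendre j q"
proof -
  obtain k where "0 < k" "k < int p" "\<not> (\<not> int q dvd k \<longrightarrow> \<chi> k = Legendre k q)"
    using assms by auto
  then obtain d where d: "0 < d" "d < int p" "\<not> int q dvd d" "\<chi> d \<noteq> Legendre d q"
    and below: "\<forall>j. 0 < j \<longrightarrow> j < d \<longrightarrow> \<not> int q dvd j \<longrightarrow> \<chi> j = Legendre j q"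
    using least_counterexample_int[of k "\<lambda>j. \<not> int q dvd j \<longrightarrow> \<chi> j = Legendre j q"] by force
  have "odd d"
  proof
    assume "even d"
    then obtain m where m: "d = 2 * m" ..
    then have "0 < m" "m < d" "\<not> int q dvd m" using d by auto
    then have "\<chi> m = Legendre m q" using below by blast
    then show False
      using d(4) m chi_mult[of 2 m] Legendre_mult[OF q_prime q_gt_2, of 2 m] two_nonresidue
      by simp
  qed
  moreover have "\<chi> d = - Legendre d q"
    using chi_unit[OF d(1,2)] Legendre_unit[OF q_prime q_gt_2 d(3)] d(4) by auto
  ultimately show ?thesis using that d below by blast
qed

text \<open>The progression \<open>d - 3q, \<dots>, d + q\<close> lies in the class of \<open>d\<close> modulo \<open>q\<close>, so by minimality
  \<open>\<chi>\<close> equals \<open>(d/q)\<close> on its first three terms and, via \<open>d + q = 2m\<close>, on the last.\<close>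
lemma progression_from_deviation:
  assumes d: "3 * int q < d" "d < int p" "odd d" "\<not> int q dvd d" "\<chi> d = - Legendre d q"
    and below: "\<forall>j. 0 < j \<longrightarrow> j < d \<longrightarrow> \<not> int q dvd j \<longrightarrow> \<chi> j = Legendre j q"
  shows "\<exists>a r. CD_progression p (-1) a r"
proof -
  define \<epsilon> where "\<epsilon> = Legendre d q"
  have \<epsilon>: "\<epsilon> = 1 \<or> \<epsilon> = -1"
    using Legendre_unit[OF q_prime q_gt_2 d(4)] by (simp add: \<epsilon>_def)
  have same_class: "\<chi> c = \<epsilon>" if "0 < c" "c < d" "[c = d] (mod int q)" for c
  proof -
    have "\<not> int q dvd c" using that(3) d(4) cong_dvd_iff by blast
    then show ?thesis
      using below that Legendre_cong[OF that(3)] by (simp add: \<epsilon>_def)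
  qed
  have first: "\<chi> (d - 3 * int q) = \<epsilon>" "\<chi> (d - 2 * int q) = \<epsilon>" "\<chi> (d - int q) = \<epsilon>"
    using d(1) q_gt_2 by (auto intro!: same_class simp: cong_iff_dvd_diff)
  have "odd (int q)" using prime_odd_nat[OF q_prime q_gt_2] by simp
  then obtain m where m: "d + int q = 2 * m" using d(3) by (metis odd_add evenE)
  have "\<not> int q dvd m"
    using d(4) m by (metis dvd_add_left_iff dvd_mult dvd_refl)
  moreover have "0 < m" "m < d" using m d(1) by auto
  ultimately have "\<chi> m = Legendre m q" using below by blast
  moreover have "Legendre (d + int q) q = \<epsilon>"
    unfolding \<epsilon>_def by (rule Legendre_cong) (simp add: cong_iff_dvd_diff)
  ultimately have last: "\<chi> (d + int q) = \<epsilon>"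
    using m chi_mult[of 2 m] Legendre_mult[OF q_prime q_gt_2, of 2 m] two_nonresidue by simp
  obtain t where t: "\<chi> t = \<epsilon>"
    using \<epsilon> chi_one two_nonresidue(2) by blast
  have terms: "d - 3 * int q + int q = d - 2 * int q" "d - 3 * int q + 2 * int q = d - int q"
    "d - 3 * int q + 3 * int q = d" "d - 3 * int q + 4 * int q = d + int q"
    by simp_all
  have "\<chi> d = - \<epsilon>" using d(5) by (simp add: \<epsilon>_def)
  with first last have "CD_progression p (-1) (t * (d - 3 * int q)) (t * int q)"
    by (intro progression_of_sign_pattern[OF \<epsilon> t]) (simp_all only: terms)
  then show ?thesis by blast
qed

end

lemma progression_2_3_7_11_nonresidues:
  assumes "\<chi> 2 = -1" "\<chi> 3 = -1" "\<chi> 7 = -1" "\<chi> 11 = -1"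
  shows "\<exists>a r. CD_progression p (-1) a r"
proof -
  consider "\<chi> 5 = 1" | "\<chi> 5 = -1" using chi_unit[of 5] p_gt_5 by fastforce
  then show ?thesis
  proof cases
    case 1
    then have "CD_progression p (-1) 24 (-2)"
      using assms by (simp add: CD_progression_def residue_or_zero_def chi_composite)
    then show ?thesis by blast
  next
    case 2
    then have "CD_progression p (-1) 6 4"
      using assms by (simp add: CD_progression_def residue_or_zero_def chi_composite)
    then show ?thesis by blast
  qed
qed

lemma progression_2_3_7_nonresidues_11_13_residues:
  assumes "\<chi> 2 = -1" "\<chi> 3 = -1" "\<chi> 7 = -1" "\<chi> 11 = 1" "\<chi> 13 = 1"
  shows "\<exists>a r. CD_progression p (-1) a r"
proof -
  consider "\<chi> 5 = 1" | "\<chi> 5 = -1" using chi_unit[of 5] p_gt_5 by fastforce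
  then show ?thesis
  proof cases
    case 1
    then have "CD_progression p (-1) 13 (-2)"
      using assms by (simp add: CD_progression_def residue_or_zero_def chi_composite)
    then show ?thesis by blast
  next
    case 2
    then have "CD_progression p (-1) 9 1"
      using assms by (simp add: CD_progression_def residue_or_zero_def chi_composite)
    then show ?thesis by blast
  qed
qed

lemma not_agreeing_mod_5:
  assumes "\<chi> 2 = -1" "\<chi> 3 = -1"
  shows "\<not> (\<forall>j. 0 < j \<longrightarrow> j < int p \<longrightarrow> \<not> 5 dvd j \<longrightarrow> \<chi> j = Legendre j 5)"
proof
  assume agree: "\<forall>j. 0 < j \<longrightarrow> j < int p \<longrightarrow> \<not> 5 dvd j \<longrightarrow> \<chi> j = Legendre j 5"
  note N = reflected_agreement[OF agree]
  txt \<open>Comparing \<open>\<chi>\<close> at \<open>j\<close> and \<open>p - j\<close> gives contradictory values of \<open>\<chi>(-1)\<close>.\<close>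
  have "int p mod 5 \<noteq> 0" using small_not_dvd_p[of 5] by auto
  then have "int p mod 5 \<in> {1, 2, 3, 4}" by auto
  then show False
    using N[of 1] N[of 2] N[of 3] N[of 4] assms chi_one chi_composite(1) p_gt_5
    by (auto simp: Legendre_5)
qed

lemma progression_2_3_7_nonresidues:
  assumes two: "\<chi> 2 = -1" and three: "\<chi> 3 = -1" and seven: "\<chi> 7 = -1"
  shows "\<exists>a r. CD_progression p (-1) a r"
proof -
  note not_agreeing_mod_5[OF two three]
  moreover have "Legendre 2 5 = -1" by (simp add: Legendre_5)
  ultimately obtain d where d: "0 < d" "d < int p" "\<not> 5 dvd d"
    and dev: "odd d" "\<chi> d = - Legendre d 5"
    and below: "\<forall>j. 0 < j \<longrightarrow> j < d \<longrightarrow> \<not> 5 dvd j \<longrightarrow> \<chi> j = Legendre j 5"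
    using least_deviation[of 5] two by auto
  then have "d \<noteq> 1" "d \<noteq> 3" "d \<noteq> 7" "d \<noteq> 9"
    using assms chi_one chi_composite by (auto simp: Legendre_5)
  with dev(1) d(1,3) have "d = 11 \<or> d = 13 \<or> 15 < d" by presburger
  then consider "d = 11" | "d = 13" | "15 < d" by blast
  then show ?thesis
  proof cases
    case 1
    then show ?thesis
      using dev(2) progression_2_3_7_11_nonresidues assms by (simp add: Legendre_5)
  next
    case 2
    then have "\<chi> 11 = 1" using below by (simp add: Legendre_5)
    then show ?thesis
      using 2 dev(2) progression_2_3_7_nonresidues_11_13_residues assms by (simp add: Legendre_5)
  next
    case 3
    then show ?thesis
      using progression_from_deviation[of 5 d] d dev below two by (simp add: Legendre_5)
  qed
qed

lemma progression_2_nonresidue_5_residue: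
  assumes two: "\<chi> 2 = -1" and five: "\<chi> 5 = 1"
  shows "\<exists>a r. CD_progression p (-1) a r"
proof -
  consider "\<chi> 3 = 1" | "\<chi> 3 = -1" using chi_unit[of 3] p_gt_5 by fastforce
  then show ?thesis
  proof cases
    case 1
    then have "CD_progression p (-1) 5 (-1)"
      using assms chi_one by (simp add: CD_progression_def residue_or_zero_def chi_composite)
    then show ?thesis by blast
  next
    case three: 2
    have "\<chi> 7 \<noteq> 0"
    proof
      assume "\<chi> 7 = 0"
      then have "\<chi> 9 = \<chi> 2" using chi_add_zero[of 7 2] by simp
      then show False using two three chi_composite by simp
    qed
    then consider "\<chi> 7 = 1" | "\<chi> 7 = -1" using Legendre_cases[of 7 p] by blast
    then show ?thesis
    proof cases
      case 1
      then have "CD_progression p (-1) 5 1"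
        using assms three by (simp add: CD_progression_def residue_or_zero_def chi_composite)
      then show ?thesis by blast
    next
      case 2
      then show ?thesis using progression_2_3_7_nonresidues two three by blast
    qed
  qed
qed

lemma progression_2_5_7_nonresidues:
  assumes two: "\<chi> 2 = -1" and five: "\<chi> 5 = -1" and seven: "\<chi> 7 = -1"
  shows "\<exists>a r. CD_progression p (-1) a r"
proof -
  consider "\<chi> 3 = 1" | "\<chi> 3 = -1" using chi_unit[of 3] p_gt_5 by fastforce
  then show ?thesis
  proof cases
    case three: 1
    consider "\<chi> 13 = 1" | "\<chi> 13 = 0" | "\<chi> 13 = -1" using Legendre_cases[of 13 p] by blast
    then show ?thesis
    proof cases
      case 1
      then have "CD_progression p (-1) 12 1"
        using assms three by (simp add: CD_progression_def residue_or_zero_def chi_composite)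
      then show ?thesis by blast
    next
      case 2
      then have "\<chi> (-1) = \<chi> 12" using chi_add_zero[of 13 "-1"] by simp
      then have "CD_progression p (-1) (-1) 1"
        using assms three chi_one
        by (simp add: CD_progression_def residue_or_zero_def chi_composite)
      then show ?thesis by blast
    next
      case thirteen: 3
      have "\<chi> 11 \<noteq> 0"
      proof
        assume "\<chi> 11 = 0"
        then have "\<chi> 16 = \<chi> 5" using chi_add_zero[of 11 5] by simp
        then show False using two five chi_composite by simp
      qed
      then consider "\<chi> 11 = 1" | "\<chi> 11 = -1" using Legendre_cases[of 11 p] by blast
      then show ?thesis
      proof cases
        case 1
        then have "CD_progression p (-1) 10 1"
          using assms three thirteen
          by (simp add: CD_progression_def residue_or_zero_def chi_composite)
        then show ?thesis by blast
      next
        case 2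
        then have "CD_progression p (-1) 30 (-4)"
          using assms three thirteen
          by (simp add: CD_progression_def residue_or_zero_def chi_composite)
        then show ?thesis by blast
      qed
    qed
  next
    case 2
    then show ?thesis using progression_2_3_7_nonresidues two seven by blast
  qed
qed

lemma progression_2_nonresidue_agreeing_mod_3:
  assumes two: "\<chi> 2 = -1"
    and agree: "\<forall>j. 0 < j \<longrightarrow> j < int p \<longrightarrow> \<not> 3 dvd j \<longrightarrow> \<chi> j = Legendre j 3"
  shows "\<exists>a r. CD_progression p (-1) a r"
proof -
  note N = reflected_agreement[OF agree]
  have "int p mod 3 \<noteq> 0" using small_not_dvd_p[of 3] by auto
  then have p_mod_3: "int p mod 3 = 1 \<or> int p mod 3 = 2" by auto
  then have minus_one: "\<chi> (-1) = 1"
    using N[of 1] N[of 2] two chi_one p_gt_5 by (auto simp: Legendre_3)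
  show ?thesis
    using p_mod_3
  proof
    assume "int p mod 3 = 1"
    then have "\<chi> 3 = 1" using N[of 3] minus_one p_gt_5 by (simp add: Legendre_3)
    then have "CD_progression p (-1) (-1) 1"
      using two minus_one chi_one by (simp add: CD_progression_def residue_or_zero_def)
    then show ?thesis by blast
  next
    assume p_mod: "int p mod 3 = 2"
    then have three: "\<chi> 3 = -1" using N[of 3] minus_one p_gt_5 by (simp add: Legendre_3)
    have five: "\<chi> 5 = -1" using agree p_gt_5 by (simp add: Legendre_3)
    have "odd p" using prime_odd_nat[OF p_prime] p_gt_5 by simp
    with p_mod p_gt_5 have "p = 11 \<or> 17 \<le> p" by presburger
    then show ?thesis
    proof
      assume "p = 11"
      then have "\<chi> 5 = \<chi> (-6)" by (intro Legendre_cong) (simp add: cong_iff_dvd_diff)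
      then show ?thesis using five minus_one two three chi_composite by simp
    next
      assume "17 \<le> p"
      then have "\<chi> 13 = 1" using agree by (simp add: Legendre_3)
      then have "CD_progression p (-1) (-13) 7"
        using two three five minus_one chi_one
        by (simp add: CD_progression_def residue_or_zero_def chi_composite)
      then show ?thesis by blast
    qed
  qed
qed

lemma progression_2_nonresidue:
  assumes two: "\<chi> 2 = -1"
  shows "\<exists>a r. CD_progression p (-1) a r"
proof (cases "\<forall>j. 0 < j \<longrightarrow> j < int p \<longrightarrow> \<not> 3 dvd j \<longrightarrow> \<chi> j = Legendre j 3")
  case True
  then show ?thesis using progression_2_nonresidue_agreeing_mod_3 two by blast
next
  case False
  moreover have "Legendre 2 3 = -1" by (simp add: Legendre_3)
  ultimately obtain d where d: "0 < d" "d < int p" "\<not> 3 dvd d"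
    and dev: "odd d" "\<chi> d = - Legendre d 3"
    and below: "\<forall>j. 0 < j \<longrightarrow> j < d \<longrightarrow> \<not> 3 dvd j \<longrightarrow> \<chi> j = Legendre j 3"
    using least_deviation[of 3] two by auto
  then have "d \<noteq> 1" using chi_one by (auto simp: Legendre_3)
  with dev(1) d(1,3) have "d = 5 \<or> d = 7 \<or> 9 < d" by presburger
  then consider "d = 5" | "d = 7" | "9 < d" by blast
  then show ?thesis
  proof cases
    case 1
    then show ?thesis
      using dev(2) progression_2_nonresidue_5_residue two by (simp add: Legendre_3)
  next
    case 2
    then have "\<chi> 5 = -1" using below by (simp add: Legendre_3)
    then show ?thesis
      using 2 dev(2) progression_2_5_7_nonresidues two by (simp add: Legendre_3)
  next
    case 3
    then show ?thesis
      using progression_from_deviation[of 3 d] d dev below two by (simp add: Legendre_3)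
  qed
qed

lemma nonresidue_progression_exists: "\<exists>a r. CD_progression p (-1) a r"
proof (cases "\<forall>j. 0 < j \<longrightarrow> j < int p \<longrightarrow> \<chi> j = 1")
  case True
  then have "\<chi> (-1) = 1" "\<chi> (-2) = 1" "\<chi> (-3) = 1"
    using chi_p_minus[of 1] chi_p_minus[of 2] chi_p_minus[of 3] p_gt_5 by auto
  then have "CD_progression p (-1) (-3) 1"
    using chi_one by (simp add: CD_progression_def residue_or_zero_def)
  then show ?thesis by blast
next
  case False
  then obtain k where "0 < k" "k < int p" "\<chi> k \<noteq> 1" by auto
  then obtain n where n: "0 < n" "n < int p" "\<chi> n \<noteq> 1"
    and below: "\<forall>j. 0 < j \<longrightarrow> j < n \<longrightarrow> \<chi> j = 1"
    using least_counterexample_int[of k "\<lambda>j. \<chi> j = 1"] by force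
  then have nonres: "\<chi> n = -1" using chi_unit by blast
  have "n \<noteq> 1" using n(3) chi_one by auto
  then consider "n = 2" | "n = 3" | "4 \<le> n" using n(1) by linarith
  then show ?thesis
  proof cases
    case 1
    then show ?thesis using progression_2_nonresidue nonres by simp
  next
    case 2
    then have "CD_progression p (-1) 0 1"
      using below nonres chi_one chi_composite(1)
      by (simp add: CD_progression_def residue_or_zero_def)
    then show ?thesis by blast
  next
    case 3
    have "odd n"
    proof
      assume "even n"
      then obtain m where "n = 2 * m" ..
      then have "\<chi> n = 1" using below 3 chi_mult[of 2 m] by simp
      then show False using nonres by simp
    qed
    with 3 have "5 \<le> n" by presburger
    then show ?thesis
      using progression_from_least_nonresidue \<open>odd n\<close> n(2) below nonres by blast
  qed
qed

end

theorem lemma4p4: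
  fixes D :: int and p :: nat
  assumes "squarefree D" and "prime p" and "p > 5" and "\<not> int p dvd D"
  shows "CD_has_Qp_point D p"
proof -
  have "2 < p" using \<open>p > 5\<close> by simp
  have "\<exists>a r. CD_progression p (Legendre D p) a r"
  proof (cases "Legendre D p = 1")
    case True
    then have "CD_progression p (Legendre D p) 1 0"
      using Legendre_one[of "int p"] \<open>p > 5\<close> by (simp add: CD_progression_def residue_or_zero_def)
    then show ?thesis by blast
  next
    case False
    then have "Legendre D p = -1"
      using Legendre_unit[OF \<open>prime p\<close> \<open>2 < p\<close> \<open>\<not> int p dvd D\<close>] by blast
    then show ?thesis using nonresidue_progression_exists[OF \<open>prime p\<close> \<open>p > 5\<close>] by simp
  qed
  then show ?thesis
    using CD_has_Qp_point_if_progression[OF \<open>prime p\<close> \<open>2 < p\<close> \<open>\<not> int p dvd D\<close>] by blast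
qed

end
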